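(* Let $n,a,t,k\in\mathbb N$ satisfy $t<a<n$. Assume $\mathcal F_1,\dots,\mathcal F_k\subseteq\binom{[n]}{a}$ satisfy $$|\mathcal F_i|\ge 2^{k-2}\cdot\sqrt{32a(n-a)}\cdot\exp\left(-\frac{(a-t-1)^2}{40a}\right)\cdot\binom{n}{a}+2^{k-2}$$ for all $i\in\{1,\dots,k\}$. Then there are $F_1\in\mathcal F_1,\dots,F_k\in\mathcal F_k$ such that $|F_1\cap F_i|\ge t+1$ for all $i\in\{2,\dots,k\}$.
   Context: $[n]=\{1,\dots,n\}$ and $\binom{[n]}{a}$ denotes the family of all $a$-element subsets of $[n]$. *)

theory Defs
  imports "HOL-Analysis.Analysis"
begin

definition ksubsets :: "nat \<Rightarrow> nat \<Rightarrow> nat set set" where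
  "ksubsets n a = {S. S \<subseteq> {1..n} \<and> card S = a}"

end

theory Submission
  imports Defs
begin

text \<open>Call a member of \<open>F\<^sub>1\<close> bad for \<open>i\<close> if it meets every member of \<open>F\<^sub>i\<close> in at most
  \<open>t\<close> points. It suffices that for each \<open>i\<close> at most \<open>\<epsilon> = sqrt(32a(n-a)) exp(-(a-t-1)\<^sup>2/(40a)) C(n,a)\<close>
  members of \<open>F\<^sub>1\<close> are bad, since the union bound then leaves a member of \<open>F\<^sub>1\<close> that is good
  for every \<open>i\<close>. So let \<open>A\<close> and \<open>B\<close> be families of \<open>a\<close>-sets with all cross intersections
  at most \<open>t\<close>. The complements of the members of \<open>B\<close> meet every member of \<open>A\<close> in at least
  \<open>s = a - t\<close> points; compress the pair until the complement family \<open>C\<close> is left-shifted. If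
  some \<open>X\<close> in \<open>A\<close> and \<open>Y\<close> in \<open>C\<close> both had all prefix counts \<open>|X \<inter> [l]|\<close>, \<open>|Y \<inter> [l]|\<close>
  within \<open>d = (s - 1)/2\<close> of their means, then pushing common elements of \<open>X\<close> and \<open>Y\<close> down
  into gaps would stay inside \<open>C\<close> and end in a member of \<open>C\<close> meeting \<open>X\<close> in fewer than \<open>s\<close>
  points. Hence all members of \<open>A\<close> or all members of \<open>C\<close> have an atypical prefix, and
  exponential moments of \<open>|X \<inter> [l]|\<close> bound the number of such sets by
  \<open>(n + 1) C(n,a) exp(-d\<^sup>2/(4a)) \<le> \<epsilon>\<close>.\<close>

lemma finite_ksubsets: "finite (ksubsets n m)"
  by (rule finite_subset[of _ "Pow {1..n}"]) (auto simp: ksubsets_def)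

lemma finite_ksubsets_member: "X \<in> ksubsets n m \<Longrightarrow> finite X"
  unfolding ksubsets_def using finite_subset by blast

lemma card_ksubsets: "card (ksubsets n m) = n choose m"
  unfolding ksubsets_def using n_subsets[of "{1..n}" m] by simp

lemma complement_ksubsets: "Y \<in> ksubsets n a \<Longrightarrow> {1..n} - Y \<in> ksubsets n (n - a)"
  unfolding ksubsets_def by (auto simp: card_Diff_subset finite_subset)

lemma inj_on_complement_ksubsets: "inj_on (\<lambda>Y. {1..n} - Y) (ksubsets n a)"
proof (rule inj_onI)
  fix X Y assume "X \<in> ksubsets n a" "Y \<in> ksubsets n a" "{1..n} - X = {1..n} - Y"
  then show "X = Y"
    unfolding ksubsets_def by (metis (no_types, lifting) double_diff mem_Collect_eq order_refl)
qed

lemma card_Int_complement: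
  assumes "X \<subseteq> U" "finite X"
  shows "card (X \<inter> (U - Y)) = card X - card (X \<inter> Y)"
proof -
  have "X \<inter> (U - Y) = X - (X \<inter> Y)"
    using assms(1) by blast
  then show ?thesis
    using assms(2) by (simp add: card_Diff_subset)
qed

section \<open>Shifting\<close>

definition shift :: "nat \<Rightarrow> nat \<Rightarrow> nat set \<Rightarrow> nat set" where
  "shift i j X = insert i (X - {j})"

definition shift_member :: "nat \<Rightarrow> nat \<Rightarrow> nat set set \<Rightarrow> nat set \<Rightarrow> nat set" where
  "shift_member i j F X = (if j \<in> X \<and> i \<notin> X \<and> shift i j X \<notin> F then shift i j X else X)"

definition shift_family :: "nat \<Rightarrow> nat \<Rightarrow> nat set set \<Rightarrow> nat set set" where
  "shift_family i j F = shift_member i j F ` F"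

definition weight :: "nat set set \<Rightarrow> nat" where
  "weight F = (\<Sum>X\<in>F. \<Sum>X)"

definition left_shifted :: "nat set set \<Rightarrow> bool" where
  "left_shifted C \<longleftrightarrow> (\<forall>Y\<in>C. \<forall>i j. 0 < i \<and> i < j \<and> j \<in> Y \<and> i \<notin> Y \<longrightarrow> shift i j Y \<in> C)"

definition cross_intersecting :: "nat \<Rightarrow> 'a set set \<Rightarrow> 'a set set \<Rightarrow> bool" where
  "cross_intersecting s A B \<longleftrightarrow> (\<forall>X\<in>A. \<forall>Y\<in>B. s \<le> card (X \<inter> Y))"

lemma shift_member_shifted: "j \<in> X \<Longrightarrow> i \<notin> X \<Longrightarrow> shift i j X \<notin> F \<Longrightarrow> shift_member i j F X = shift i j X"
  unfolding shift_member_def by simp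

lemma shift_member_fixed: "\<not> (j \<in> X \<and> i \<notin> X \<and> shift i j X \<notin> F) \<Longrightarrow> shift_member i j F X = X"
  unfolding shift_member_def by (rule if_not_P)

lemma shift_shift_inverse: "j \<in> X \<Longrightarrow> i \<notin> X \<Longrightarrow> shift j i (shift i j X) = X"
  unfolding shift_def by auto

lemma card_shift:
  assumes "finite X" "j \<in> X" "i \<notin> X"
  shows "card (shift i j X) = card X"
  using card.remove[OF assms(1,2)] assms unfolding shift_def by simp

lemma sum_shift: "finite X \<Longrightarrow> j \<in> X \<Longrightarrow> i \<notin> X \<Longrightarrow> \<Sum>(shift i j X) + j = \<Sum>X + i"
  unfolding shift_def by (simp add: sum.insert_remove) (metis add.commute sum.remove)

lemma inj_on_shift_member: "inj_on (shift_member i j F) F"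
proof (rule inj_onI)
  fix X Y assume "X \<in> F" "Y \<in> F" and eq: "shift_member i j F X = shift_member i j F Y"
  show "X = Y"
  proof (cases "j \<in> X \<and> i \<notin> X \<and> shift i j X \<notin> F"; cases "j \<in> Y \<and> i \<notin> Y \<and> shift i j Y \<notin> F")
    assume X: "j \<in> X \<and> i \<notin> X \<and> shift i j X \<notin> F" and Y: "j \<in> Y \<and> i \<notin> Y \<and> shift i j Y \<notin> F"
    then have "shift i j X = shift i j Y"
      using eq unfolding shift_member_def by simp
    then show ?thesis
      using X Y shift_shift_inverse by metis
  qed (use eq \<open>X \<in> F\<close> \<open>Y \<in> F\<close> in \<open>auto simp: shift_member_def\<close>)
qed

lemma card_shift_family: "card (shift_family i j F) = card F"
  unfolding shift_family_def by (simp add: card_image inj_on_shift_member)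

lemma shift_family_ksubsets:
  assumes "F \<subseteq> ksubsets n m" and "i \<in> {1..n}"
  shows "shift_family i j F \<subseteq> ksubsets n m"
proof
  fix Z assume "Z \<in> shift_family i j F"
  then obtain X where X: "X \<in> F" "Z = shift_member i j F X"
    unfolding shift_family_def by auto
  then have "X \<subseteq> {1..n}" "card X = m" "finite X"
    using assms(1) finite_subset[of X "{1..n}"] unfolding ksubsets_def by auto
  with X assms(2) show "Z \<in> ksubsets n m"
    unfolding shift_member_def ksubsets_def by (auto simp: card_shift) (auto simp: shift_def)
qed

lemma weight_shift_family_less:
  assumes "finite F" "\<forall>X\<in>F. finite X" "i < j"
    and "X \<in> F" "j \<in> X" "i \<notin> X" "shift i j X \<notin> F"
  shows "weight (shift_family i j F) < weight F"
proof -
  have le: "\<Sum>(shift_member i j F Y) \<le> \<Sum>Y" if "Y \<in> F" for Y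
  proof (cases "j \<in> Y \<and> i \<notin> Y \<and> shift i j Y \<notin> F")
    case True
    then show ?thesis
      using sum_shift[of Y j i] assms(2,3) that by (simp add: shift_member_shifted)
  next
    case False
    then show ?thesis by (simp add: shift_member_fixed)
  qed
  have "\<Sum>(shift_member i j F X) < \<Sum>X"
    using sum_shift[of X j i] assms by (simp add: shift_member_shifted)
  then have "(\<Sum>Y\<in>F. \<Sum>(shift_member i j F Y)) < weight F"
    unfolding weight_def
    using sum_strict_mono_ex1[OF assms(1), of "\<lambda>Y. \<Sum>(shift_member i j F Y)" "\<lambda>Y. \<Sum>Y"] le assms(4)
    by blast
  then show ?thesis
    unfolding weight_def shift_family_def by (simp add: sum.reindex inj_on_shift_member)
qed

lemma card_shift_Int:
  assumes "finite X" "j \<in> X" "i \<notin> X" "i \<noteq> j"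
  shows "card (shift i j X \<inter> Y) + of_bool (j \<in> Y) = card (X \<inter> Y) + of_bool (i \<in> Y)"
proof -
  have "shift i j X \<inter> Y = (if i \<in> Y then insert i (X \<inter> Y - {j}) else X \<inter> Y - {j})"
    unfolding shift_def using assms by auto
  moreover have "j \<in> Y \<Longrightarrow> 0 < card (X \<inter> Y)"
    using assms(1,2) by (metis IntI card_gt_0_iff empty_iff finite_Int)
  ultimately show ?thesis using assms
    by (cases "i \<in> Y"; cases "j \<in> Y") (auto simp: card_insert_if card_Diff_singleton_if)
qed

lemma card_shift_Int_shift:
  assumes "finite X" "j \<in> X" "i \<notin> X" "j \<in> Y" "i \<notin> Y" "i \<noteq> j"
  shows "card (shift i j X \<inter> shift i j Y) = card (X \<inter> Y)"
proof -
  have "shift i j X \<inter> shift i j Y = insert i (X \<inter> Y - {j})"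
    unfolding shift_def using assms by auto
  moreover have "0 < card (X \<inter> Y)"
    using assms(1,2,4) by (metis IntI card_gt_0_iff empty_iff finite_Int)
  ultimately show ?thesis using assms by (simp add: card_insert_if card_Diff_singleton_if)
qed

text \<open>The last hypothesis holds when \<open>Y\<close> is not shifted although it could be: then its shift
  lies in the other family.\<close>

lemma card_shift_Int_ge:
  assumes "finite X" "finite Y" "i \<noteq> j" "j \<in> X" "i \<notin> X"
    and "s \<le> card (X \<inter> Y)"
    and "j \<in> Y \<Longrightarrow> i \<notin> Y \<Longrightarrow> s \<le> card (X \<inter> shift i j Y)"
  shows "s \<le> card (shift i j X \<inter> Y)"
proof (cases "j \<in> Y \<and> i \<notin> Y")
  case True
  then show ?thesis
    using card_shift_Int[of X j i Y] card_shift_Int[of Y j i X] assms by (simp add: Int_commute)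
next
  case False
  then show ?thesis
    using card_shift_Int[of X j i Y] assms by (cases "i \<in> Y"; cases "j \<in> Y") auto
qed

lemma cross_intersecting_shift_family:
  assumes cross: "cross_intersecting s A C"
    and fin: "\<forall>X\<in>A. finite X" "\<forall>Y\<in>C. finite Y" and "i \<noteq> j"
  shows "cross_intersecting s (shift_family i j A) (shift_family i j C)"
  unfolding cross_intersecting_def shift_family_def
proof (intro ballI, elim imageE)
  fix X Y X' Y' assume X': "X' = shift_member i j A X" "X \<in> A"
    and Y': "Y' = shift_member i j C Y" "Y \<in> C"
  have XY: "s \<le> card (X \<inter> Y)" and fXY: "finite X" "finite Y"
    using cross fin X' Y' unfolding cross_intersecting_def by auto
  have X_shift: "s \<le> card (X \<inter> shift i j Y)" if "shift i j Y \<in> C"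
    using cross X'(2) that unfolding cross_intersecting_def by blast
  have Y_shift: "s \<le> card (Y \<inter> shift i j X)" if "shift i j X \<in> A"
    using cross Y'(2) that unfolding cross_intersecting_def by (metis Int_commute)
  show "s \<le> card (X' \<inter> Y')"
  proof (cases "j \<in> X \<and> i \<notin> X \<and> shift i j X \<notin> A"; cases "j \<in> Y \<and> i \<notin> Y \<and> shift i j Y \<notin> C")
    assume "j \<in> X \<and> i \<notin> X \<and> shift i j X \<notin> A" "j \<in> Y \<and> i \<notin> Y \<and> shift i j Y \<notin> C"
    then show ?thesis
      using X' Y' XY fXY card_shift_Int_shift[of X j i Y] \<open>i \<noteq> j\<close> by (simp add: shift_member_shifted)
  next
    assume "j \<in> X \<and> i \<notin> X \<and> shift i j X \<notin> A" "\<not> (j \<in> Y \<and> i \<notin> Y \<and> shift i j Y \<notin> C)"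
    moreover have "s \<le> card (shift i j X \<inter> Y)"
      using card_shift_Int_ge[of X Y i j s] calculation fXY XY X_shift \<open>i \<noteq> j\<close> by blast
    ultimately show ?thesis
      using X' Y' by (simp add: shift_member_shifted shift_member_fixed)
  next
    assume "\<not> (j \<in> X \<and> i \<notin> X \<and> shift i j X \<notin> A)" "j \<in> Y \<and> i \<notin> Y \<and> shift i j Y \<notin> C"
    moreover have "s \<le> card (shift i j Y \<inter> X)"
      using card_shift_Int_ge[of Y X i j s] calculation fXY XY Y_shift \<open>i \<noteq> j\<close>
      by (metis Int_commute)
    ultimately show ?thesis
      using X' Y' by (simp add: shift_member_shifted shift_member_fixed Int_commute)
  next
    assume "\<not> (j \<in> X \<and> i \<notin> X \<and> shift i j X \<notin> A)" "\<not> (j \<in> Y \<and> i \<notin> Y \<and> shift i j Y \<notin> C)"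
    then show ?thesis
      using X' Y' XY by (simp add: shift_member_fixed)
  qed
qed

lemma ex_left_shifted_cross_intersecting:
  assumes "A \<subseteq> ksubsets n a" "C \<subseteq> ksubsets n m" "cross_intersecting s A C"
  obtains A' C' where "A' \<subseteq> ksubsets n a" "C' \<subseteq> ksubsets n m"
    "card A' = card A" "card C' = card C" "cross_intersecting s A' C'" "left_shifted C'"
proof -
  define P where "P = (\<lambda>(A', C'). A' \<subseteq> ksubsets n a \<and> C' \<subseteq> ksubsets n m \<and>
      card A' = card A \<and> card C' = card C \<and> cross_intersecting s A' C')"
  have "P (A, C)" unfolding P_def using assms by simp
  obtain A' C' where P': "P (A', C')"
    and min: "\<And>A'' C''. P (A'', C'') \<Longrightarrow> weight C' \<le> weight C''"
  proof -
    obtain AC where "P AC" "\<forall>AC'. P AC' \<longrightarrow> weight (snd AC) \<le> weight (snd AC')"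
      using ex_has_least_nat[of P "(A, C)" "\<lambda>AC. weight (snd AC)"] \<open>P (A, C)\<close> by blast
    then show thesis
      using that[of "fst AC" "snd AC"] by auto
  qed
  then have A': "A' \<subseteq> ksubsets n a" and C': "C' \<subseteq> ksubsets n m"
    unfolding P_def by auto
  have "left_shifted C'"
    unfolding left_shifted_def
  proof (intro ballI allI impI, rule ccontr)
    fix Y i j assume Y: "Y \<in> C'" and ij: "0 < i \<and> i < j \<and> j \<in> Y \<and> i \<notin> Y"
      and not_in: "shift i j Y \<notin> C'"
    have "i \<in> {1..n}"
      using Y C' ij unfolding ksubsets_def by fastforce
    moreover have "\<forall>X\<in>A'. finite X" "\<forall>Y\<in>C'. finite Y"
      using A' C' finite_ksubsets_member by blast+
    ultimately have "P (shift_family i j A', shift_family i j C')"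
      using P' shift_family_ksubsets[OF A'] shift_family_ksubsets[OF C'] ij
        cross_intersecting_shift_family[of s A' C' i j]
      unfolding P_def by (auto simp: card_shift_family)
    then have "weight C' \<le> weight (shift_family i j C')" by (rule min)
    moreover have "weight (shift_family i j C') < weight C'"
      using weight_shift_family_less[of C' i j Y] finite_subset[OF C' finite_ksubsets]
        finite_ksubsets_member C' Y ij not_in by blast
    ultimately show False by simp
  qed
  with P' that show ?thesis unfolding P_def by blast
qed

section \<open>Sparse pairs and left-shifted families\<close>

definition prefix_sparse :: "nat \<Rightarrow> nat set \<Rightarrow> nat set \<Rightarrow> bool" where
  "prefix_sparse s X Y \<longleftrightarrow> (\<forall>l. card (X \<inter> {1..l}) + card (Y \<inter> {1..l}) < l + s)"

lemma card_Int_atLeastAtMost_split: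
  "l \<le> w \<Longrightarrow> card (Z \<inter> {1..w}) = card (Z \<inter> {1..l}) + card (Z \<inter> {Suc l..w})"
proof -
  assume "l \<le> w"
  then have "Z \<inter> {1..w} = (Z \<inter> {1..l}) \<union> (Z \<inter> {Suc l..w})"
    by auto
  then show ?thesis
    by (simp add: card_Un_disjoint disjoint_iff)
qed

lemma card_Int_add_card_Int:
  assumes "finite I"
  shows "card (X \<inter> I) + card (Y \<inter> I) = card ((X \<union> Y) \<inter> I) + card (X \<inter> Y \<inter> I)"
proof -
  have "(X \<union> Y) \<inter> I = X \<inter> I \<union> Y \<inter> I" "X \<inter> Y \<inter> I = X \<inter> I \<inter> (Y \<inter> I)"
    by blast+
  then show ?thesis
    using card_Un_Int[of "X \<inter> I" "Y \<inter> I"] assms by simp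
qed

lemma prefix_sparse_below_gap:
  assumes "prefix_sparse s X Y" "w \<in> X \<inter> Y" "{Suc z..w} \<subseteq> X \<union> Y" "z \<le> l" "l < w"
  shows "card (X \<inter> {1..l}) + card (Y \<inter> {1..l}) + 1 < l + s"
proof -
  let ?I = "{Suc l..w}"
  have "card (X \<inter> ?I) + card (Y \<inter> ?I) = card ((X \<union> Y) \<inter> ?I) + card (X \<inter> Y \<inter> ?I)"
    by (rule card_Int_add_card_Int) simp
  moreover have "?I \<subseteq> {Suc z..w}"
    using assms(4) by auto
  then have "(X \<union> Y) \<inter> ?I = ?I"
    using assms(3) by blast
  moreover have "w \<in> X \<inter> Y \<inter> ?I"
    using assms(2,5) by simp
  then have "0 < card (X \<inter> Y \<inter> ?I)"
    by (metis card_gt_0_iff empty_iff finite_Int finite_atLeastAtMost)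
  ultimately have "w - l < card (X \<inter> ?I) + card (Y \<inter> ?I)"
    by simp
  moreover have "card (X \<inter> {1..w}) + card (Y \<inter> {1..w}) < w + s"
    using assms(1) unfolding prefix_sparse_def by blast
  ultimately show ?thesis
    using assms(5) card_Int_atLeastAtMost_split[of l w X] card_Int_atLeastAtMost_split[of l w Y]
    by linarith
qed

lemma prefix_sparse_shift:
  assumes sparse: "prefix_sparse s X Y" and w: "w \<in> X \<inter> Y"
    and z: "0 < z" "z < w" "z \<notin> X \<union> Y" and gap: "{Suc z..w} \<subseteq> X \<union> Y"
  shows "prefix_sparse s X (shift z w Y)"
  unfolding prefix_sparse_def
proof
  fix l
  show "card (X \<inter> {1..l}) + card (shift z w Y \<inter> {1..l}) < l + s"
  proof (cases "z \<le> l \<and> l < w")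
    case True
    then have "shift z w Y \<inter> {1..l} = insert z (Y \<inter> {1..l})"
      unfolding shift_def using z by auto
    then show ?thesis
      using prefix_sparse_below_gap[OF sparse w gap] True z(3) by (simp add: card_insert_if)
  next
    case False
    have "card (shift z w Y \<inter> {1..l}) \<le> card (Y \<inter> {1..l})"
    proof (cases "l < z")
      case True
      then have "shift z w Y \<inter> {1..l} = Y \<inter> {1..l}"
        unfolding shift_def using z by auto
      then show ?thesis by simp
    next
      case False
      then have "w \<le> l"
        using \<open>\<not> (z \<le> l \<and> l < w)\<close> by simp
      then have "shift z w Y \<inter> {1..l} = insert z (Y \<inter> {1..l} - {w})" and "w \<in> Y \<inter> {1..l}"
        unfolding shift_def using w z by auto
      then show ?thesis
        using card.remove[of "Y \<inter> {1..l}" w] z(3) by (simp add: card_insert_if)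
    qed
    moreover have "card (X \<inter> {1..l}) + card (Y \<inter> {1..l}) < l + s"
      using sparse unfolding prefix_sparse_def by blast
    ultimately show ?thesis
      by linarith
  qed
qed

lemma obtains_largest_gap:
  assumes "card (S \<inter> {1..w}) < w"
  obtains z where "0 < z" "z \<le> w" "z \<notin> S" "{Suc z..w} \<subseteq> S"
proof -
  have "{1..w} - S \<noteq> {}"
    using assms by (metis Diff_eq_empty_iff card_atLeastAtMost diff_Suc_1 inf.absorb_iff2 less_irrefl)
  define z where "z = Max ({1..w} - S)"
  have z: "z \<in> {1..w} - S" "\<forall>x\<in>{1..w} - S. x \<le> z"
    unfolding z_def by (rule Max_in, simp, fact) simp
  moreover have "{Suc z..w} \<subseteq> S"
  proof
    fix x assume "x \<in> {Suc z..w}"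
    then show "x \<in> S"
      using z(2) by (metis Diff_iff atLeastAtMost_iff le_trans not_less_eq_eq le_add1 plus_1_eq_Suc)
  qed
  ultimately show ?thesis
    using that[of z] by simp
qed

lemma prefix_sparse_obtains_gap:
  assumes "prefix_sparse s X Y" "finite X" "0 \<notin> X" "s \<le> card (X \<inter> Y)"
  obtains w z where "w \<in> X \<inter> Y" "0 < z" "z < w" "z \<notin> X \<union> Y" "{Suc z..w} \<subseteq> X \<union> Y"
proof -
  have "card (X \<inter> {1..0}) + card (Y \<inter> {1..0}) < 0 + s"
    using assms(1) unfolding prefix_sparse_def by blast
  then have "X \<inter> Y \<noteq> {}"
    using assms(4) by auto
  define w where "w = Max (X \<inter> Y)"
  have "finite (X \<inter> Y)"
    using assms(2) by simp
  then have w: "w \<in> X \<inter> Y" "X \<inter> Y \<subseteq> {..w}"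
    unfolding w_def using \<open>X \<inter> Y \<noteq> {}\<close> by (rule Max_in) (use \<open>finite (X \<inter> Y)\<close> in auto)
  have "X \<inter> Y \<subseteq> {1..w}"
  proof
    fix x assume "x \<in> X \<inter> Y"
    then show "x \<in> {1..w}"
      using w(2) assms(3) by (cases x) auto
  qed
  then have "X \<inter> Y \<inter> {1..w} = X \<inter> Y"
    by blast
  moreover have "card (X \<inter> {1..w}) + card (Y \<inter> {1..w}) < w + s"
    using assms(1) unfolding prefix_sparse_def by blast
  ultimately have "card ((X \<union> Y) \<inter> {1..w}) < w"
    using assms(4) card_Int_add_card_Int[of "{1..w}" X Y] by simp
  then obtain z where "0 < z" "z \<le> w" "z \<notin> X \<union> Y" "{Suc z..w} \<subseteq> X \<union> Y"
    by (rule obtains_largest_gap)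
  moreover have "z \<noteq> w"
    using w(1) \<open>z \<notin> X \<union> Y\<close> by blast
  ultimately show ?thesis
    using that w(1) by simp
qed

text \<open>The induction shifts the largest common element of \<open>X\<close> and \<open>Y\<close> into the largest gap
  below it.\<close>

lemma left_shifted_ex_small_Int:
  assumes "left_shifted C" "finite X" "0 \<notin> X" "Y \<in> C" "prefix_sparse s X Y"
  shows "\<exists>Y'\<in>C. card (X \<inter> Y') < s"
  using assms(4,5)
proof (induction "card (X \<inter> Y)" arbitrary: Y rule: less_induct)
  case less
  show ?case
  proof (cases "card (X \<inter> Y) < s")
    case True
    then show ?thesis
      using less.prems by blast
  next
    case False
    then have "s \<le> card (X \<inter> Y)"
      by simp
    then obtain w z where w: "w \<in> X \<inter> Y" and z: "0 < z" "z < w" "z \<notin> X \<union> Y"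
      and gap: "{Suc z..w} \<subseteq> X \<union> Y"
      by (rule prefix_sparse_obtains_gap[OF less.prems(2) assms(2,3)])
    have "shift z w Y \<in> C"
      using assms(1) less.prems(1) w z unfolding left_shifted_def by blast
    moreover have "X \<inter> shift z w Y = X \<inter> Y - {w}"
      unfolding shift_def using z(3) by auto
    then have "card (X \<inter> shift z w Y) < card (X \<inter> Y)"
      using card_Diff1_less[OF _ w] assms(2) by simp
    moreover have "prefix_sparse s X (shift z w Y)"
      using prefix_sparse_shift[OF less.prems(2) w z gap] .
    ultimately show ?thesis
      using less.hyps by blast
  qed
qed

section \<open>Concentration of prefix counts\<close>

lemma sum_Pow_power_card:
  fixes u :: "'a :: comm_semiring_1"
  assumes "finite T"
  shows "(\<Sum>S\<in>Pow T. u ^ card S) = (1 + u) ^ card T"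
  using prod_add[OF assms, of "\<lambda>_. u" "\<lambda>_. 1"] by (simp add: add.commute)

lemma card_ksubsets_supset_le:
  assumes "S \<subseteq> {1..n}" "card S \<le> m"
  shows "card {X\<in>ksubsets n m. S \<subseteq> X} \<le> (n - card S) choose (m - card S)"
proof -
  have "finite S"
    using assms(1) finite_subset by blast
  have "(\<lambda>X. X - S) ` {X\<in>ksubsets n m. S \<subseteq> X} \<subseteq> {B. B \<subseteq> {1..n} - S \<and> card B = m - card S}"
  proof
    fix B assume "B \<in> (\<lambda>X. X - S) ` {X\<in>ksubsets n m. S \<subseteq> X}"
    then obtain X where X: "X \<in> ksubsets n m" "S \<subseteq> X" "B = X - S"
      by blast
    then show "B \<in> {B. B \<subseteq> {1..n} - S \<and> card B = m - card S}"
      using card_Diff_subset[OF \<open>finite S\<close> X(2)] unfolding ksubsets_def by auto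
  qed
  then have "card ((\<lambda>X. X - S) ` {X\<in>ksubsets n m. S \<subseteq> X}) \<le> card {B. B \<subseteq> {1..n} - S \<and> card B = m - card S}"
    by (rule card_mono[rotated]) simp
  moreover have "inj_on (\<lambda>X. X - S) {X\<in>ksubsets n m. S \<subseteq> X}"
    by (rule inj_onI) auto
  ultimately have "card {X\<in>ksubsets n m. S \<subseteq> X} \<le> card {B. B \<subseteq> {1..n} - S \<and> card B = m - card S}"
    by (simp add: card_image)
  also have "\<dots> = (n - card S) choose (m - card S)"
    using assms(1) \<open>finite S\<close> by (simp add: n_subsets card_Diff_subset)
  finally show ?thesis .
qed

lemma binomial_diff_le:
  assumes "k \<le> m" "m \<le> n"
  shows "real ((n - k) choose (m - k)) \<le> real (n choose m) * (real m / real n) ^ k"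
  using assms(1)
proof (induction k)
  case 0
  then show ?case by simp
next
  case (Suc k)
  then have "k < m" "0 < n - k"
    using assms(2) by simp_all
  have "(m - k) * ((n - k) choose (m - k)) = (n - k) * ((n - Suc k) choose (m - Suc k))"
    using binomial_absorption[of "m - k - 1" "n - k"] \<open>k < m\<close> by (simp add: Suc_diff_Suc)
  then have "real (m - k) * real ((n - k) choose (m - k)) = real (n - k) * real ((n - Suc k) choose (m - Suc k))"
    by (metis of_nat_mult)
  then have step: "real ((n - Suc k) choose (m - Suc k)) = real ((n - k) choose (m - k)) * (real (m - k) / real (n - k))"
    using \<open>0 < n - k\<close> by (simp add: field_simps)
  have "real (m - k) * real n \<le> real m * real (n - k)"
    using \<open>k < m\<close> assms(2) by (simp add: of_nat_diff algebra_simps mult_left_mono)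
  then have "real (m - k) / real (n - k) \<le> real m / real n"
    using \<open>0 < n - k\<close> by (simp add: divide_simps)
  then have "real ((n - Suc k) choose (m - Suc k)) \<le> real (n choose m) * (real m / real n) ^ k * (real m / real n)"
    unfolding step using Suc \<open>k < m\<close> by (intro mult_mono) auto
  then show ?case
    by (metis mult.assoc power_Suc2)
qed

lemma card_ksubsets_supset_le_real:
  assumes "S \<subseteq> {1..n}" "m \<le> n"
  shows "real (card {X\<in>ksubsets n m. S \<subseteq> X}) \<le> real (n choose m) * (real m / real n) ^ card S"
proof (cases "card S \<le> m")
  case True
  then show ?thesis
    using card_ksubsets_supset_le[OF assms(1) True] binomial_diff_le[OF True assms(2)]
    by (meson of_nat_le_iff order_trans)
next
  case False
  have "\<not> S \<subseteq> X" if "X \<in> ksubsets n m" for X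
    using False card_mono[OF finite_ksubsets_member[OF that]] that unfolding ksubsets_def by auto
  then have "{X\<in>ksubsets n m. S \<subseteq> X} = {}"
    by blast
  then show ?thesis
    by (simp only: card.empty) simp
qed

lemma sum_ksubsets_power_card_Int_le:
  fixes u :: real
  assumes "m \<le> n" "L \<subseteq> {1..n}" "0 \<le> u"
  shows "(\<Sum>X\<in>ksubsets n m. (1 + u) ^ card (X \<inter> L)) \<le> real (n choose m) * (1 + u * real m / real n) ^ card L"
proof -
  have "finite L"
    using assms(2) finite_subset by blast
  let ?K = "ksubsets n m"
  have "(\<Sum>X\<in>?K. (1 + u) ^ card (X \<inter> L)) = (\<Sum>X\<in>?K. \<Sum>S\<in>{S. S \<in> Pow L \<and> S \<subseteq> X}. u ^ card S)"
    using \<open>finite L\<close> by (intro sum.cong) (auto simp flip: sum_Pow_power_card intro: sum.cong)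
  also have "\<dots> = (\<Sum>S\<in>Pow L. \<Sum>X\<in>{X. X \<in> ?K \<and> S \<subseteq> X}. u ^ card S)"
    by (rule sum.swap_restrict) (simp_all add: finite_ksubsets \<open>finite L\<close>)
  also have "\<dots> = (\<Sum>S\<in>Pow L. u ^ card S * real (card {X\<in>?K. S \<subseteq> X}))"
    by (simp add: mult.commute)
  also have "\<dots> \<le> (\<Sum>S\<in>Pow L. u ^ card S * (real (n choose m) * (real m / real n) ^ card S))"
    using card_ksubsets_supset_le_real assms by (intro sum_mono mult_left_mono) auto
  also have "\<dots> = real (n choose m) * (\<Sum>S\<in>Pow L. (u * real m / real n) ^ card S)"
    by (simp add: sum_distrib_left mult.left_commute flip: power_mult_distrib times_divide_eq_right)
  also have "\<dots> = real (n choose m) * (1 + u * real m / real n) ^ card L"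
    by (simp add: sum_Pow_power_card \<open>finite L\<close>)
  finally show ?thesis .
qed

lemma card_ksubsets_card_Int_gt_le:
  assumes "m \<le> n" "L \<subseteq> {1..n}" "0 \<le> \<theta>"
  shows "real (card {X\<in>ksubsets n m. y < real (card (X \<inter> L))}) * exp (\<theta> * y)
      \<le> real (n choose m) * (1 + (exp \<theta> - 1) * real m / real n) ^ card L"
proof -
  let ?T = "{X\<in>ksubsets n m. y < real (card (X \<inter> L))}"
  have "real (card ?T) * exp (\<theta> * y) = (\<Sum>X\<in>?T. exp (\<theta> * y))"
    by simp
  also have "\<dots> \<le> (\<Sum>X\<in>?T. (1 + (exp \<theta> - 1)) ^ card (X \<inter> L))"
  proof (rule sum_mono)
    fix X assume "X \<in> ?T"
    then have "\<theta> * y \<le> real (card (X \<inter> L)) * \<theta>"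
      using assms(3) by (simp add: mult_left_mono mult.commute)
    then have "exp (\<theta> * y) \<le> exp (real (card (X \<inter> L)) * \<theta>)"
      by simp
    then show "exp (\<theta> * y) \<le> (1 + (exp \<theta> - 1)) ^ card (X \<inter> L)"
      by (simp add: exp_of_nat_mult)
  qed
  also have "\<dots> \<le> (\<Sum>X\<in>ksubsets n m. (1 + (exp \<theta> - 1)) ^ card (X \<inter> L))"
    by (rule sum_mono2[OF finite_ksubsets]) auto
  also have "\<dots> \<le> real (n choose m) * (1 + (exp \<theta> - 1) * real m / real n) ^ card L"
    using assms by (intro sum_ksubsets_power_card_Int_le) auto
  finally show ?thesis .
qed

lemma exp_minus_le:
  fixes x :: real
  assumes "0 \<le> x"
  shows "exp (- x) \<le> 1 - x + x\<^sup>2"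
proof -
  have "1 - x + x\<^sup>2 = (x - 1 / 2)\<^sup>2 + 3 / 4"
    by (simp add: power2_eq_square field_simps)
  then have "0 \<le> 1 - x + x\<^sup>2"
    by (metis add_nonneg_nonneg zero_le_power2 zero_le_divide_iff zero_le_numeral)
  moreover have "1 + x + x\<^sup>2 / 2 \<le> exp x"
    using exp_lower_Taylor_quadratic[OF assms] .
  moreover have "1 \<le> (1 - x + x\<^sup>2) * (1 + x + x\<^sup>2 / 2)"
  proof -
    have "(1 - x + x\<^sup>2) * (1 + x + x\<^sup>2 / 2) = 1 + (x\<^sup>2 + x ^ 3 + x ^ 4) / 2"
      by (simp add: field_simps power2_eq_square power3_eq_cube power4_eq_xxxx)
    then show ?thesis
      using assms by simp
  qed
  ultimately have "1 \<le> (1 - x + x\<^sup>2) * exp x"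
    by (meson mult_left_mono order_trans)
  then show ?thesis
    by (simp add: exp_minus field_simps)
qed

text \<open>The branch \<open>1 - p\<close> serves the complement families, whose members have size \<open>n - a\<close>;
  it comes from \<open>1 + (e\<^sup>\<theta> - 1) p = e\<^sup>\<theta> (1 + (e\<^sup>-\<^sup>\<theta> - 1) (1 - p))\<close>.\<close>

lemma one_plus_exp_minus_one_le:
  fixes \<theta> p :: real
  assumes "0 \<le> \<theta>" "\<theta> \<le> 1" "0 \<le> p" "p \<le> 1"
  shows "1 + (exp \<theta> - 1) * p \<le> exp (\<theta> * p + \<theta>\<^sup>2 * min p (1 - p))"
proof -
  have "1 + (exp \<theta> - 1) * p \<le> exp ((exp \<theta> - 1) * p)"
    by (rule exp_ge_add_one_self)
  also have "\<dots> \<le> exp ((\<theta> + \<theta>\<^sup>2) * p)"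
    using exp_bound[OF assms(1,2)] assms(3) by (simp add: mult_right_mono)
  also have "\<dots> = exp (\<theta> * p + \<theta>\<^sup>2 * p)"
    by (simp add: algebra_simps)
  finally have upper: "1 + (exp \<theta> - 1) * p \<le> exp (\<theta> * p + \<theta>\<^sup>2 * p)" .
  have "1 + (exp \<theta> - 1) * p = exp \<theta> * (1 + (exp (- \<theta>) - 1) * (1 - p))"
    by (simp add: exp_minus field_simps)
  also have "\<dots> \<le> exp \<theta> * exp ((exp (- \<theta>) - 1) * (1 - p))"
    by (simp add: exp_ge_add_one_self)
  also have "\<dots> \<le> exp \<theta> * exp ((- \<theta> + \<theta>\<^sup>2) * (1 - p))"
    using exp_minus_le[OF assms(1)] assms(4) by (simp add: mult_right_mono)
  also have "\<dots> = exp (\<theta> * p + \<theta>\<^sup>2 * (1 - p))"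
    by (simp add: algebra_simps flip: exp_add)
  finally have lower: "1 + (exp \<theta> - 1) * p \<le> exp (\<theta> * p + \<theta>\<^sup>2 * (1 - p))" .
  show ?thesis
    using upper lower by (simp add: min_def)
qed

lemma card_ksubsets_prefix_gt_le_exp:
  fixes \<theta> d :: real
  assumes "m \<le> n" "l \<le> n" "0 \<le> \<theta>" "\<theta> \<le> 1"
  defines "p \<equiv> real m / real n"
  shows "real (card {X\<in>ksubsets n m. real l * real m / real n + d < real (card (X \<inter> {1..l}))})
    \<le> real (n choose m) * exp (\<theta>\<^sup>2 * (real l * min p (1 - p)) - \<theta> * d)"
proof -
  let ?T = "{X\<in>ksubsets n m. real l * real m / real n + d < real (card (X \<inter> {1..l}))}"
  let ?C = "real (n choose m)"
  let ?q = "min p (1 - p)"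
  have p: "0 \<le> p" "p \<le> 1"
    unfolding p_def using assms(1) by (auto simp: divide_le_eq_1)
  have "real (card ?T) * exp (\<theta> * (real l * p + d)) \<le> ?C * (1 + (exp \<theta> - 1) * p) ^ l"
    using card_ksubsets_card_Int_gt_le[OF assms(1) _ assms(3), of "{1..l}" "real l * p + d"] assms(2)
    unfolding p_def by simp
  also have "\<dots> \<le> ?C * exp (\<theta> * p + \<theta>\<^sup>2 * ?q) ^ l"
    using one_plus_exp_minus_one_le[OF assms(3,4) p] assms(3) p(1)
    by (intro mult_left_mono power_mono) auto
  also have "\<dots> = ?C * exp (real l * (\<theta> * p + \<theta>\<^sup>2 * ?q))"
    by (simp add: exp_of_nat_mult)
  finally have "real (card ?T) \<le> ?C * exp (real l * (\<theta> * p + \<theta>\<^sup>2 * ?q)) / exp (\<theta> * (real l * p + d))"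
    by (simp add: le_divide_eq)
  also have "\<dots> = ?C * exp (real l * (\<theta> * p + \<theta>\<^sup>2 * ?q) - \<theta> * (real l * p + d))"
    by (simp add: exp_diff)
  also have "\<dots> = ?C * exp (\<theta>\<^sup>2 * (real l * ?q) - \<theta> * d)"
    by (rule arg_cong[where f = "\<lambda>x. ?C * exp x"]) (simp add: algebra_simps)
  finally show ?thesis .
qed

lemma card_ksubsets_prefix_gt_le:
  fixes b d :: real
  assumes "m \<le> n" "l \<le> n" "0 < b" "real (min m (n - m)) \<le> b" "0 \<le> d" "d \<le> 2 * b"
  shows "real (card {X\<in>ksubsets n m. real l * real m / real n + d < real (card (X \<inter> {1..l}))})
    \<le> real (n choose m) * exp (- d\<^sup>2 / (4 * b))"
proof -
  define \<theta> where "\<theta> = d / (2 * b)"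
  define p where "p = real m / real n"
  have \<theta>: "0 \<le> \<theta>" "\<theta> \<le> 1"
    using assms(3,5,6) unfolding \<theta>_def by auto
  have "real l * min p (1 - p) \<le> b"
  proof (cases "n = 0")
    case True
    then show ?thesis
      using assms(2,3) by simp
  next
    case False
    have "real l * min p (1 - p) \<le> real n * min p (1 - p)"
      using assms(1,2) unfolding p_def by (intro mult_right_mono) (auto simp: divide_le_eq_1)
    also have "\<dots> = real (min m (n - m))"
      using False assms(1) unfolding p_def by (simp add: min_mult_distrib_left of_nat_min of_nat_diff algebra_simps)
    finally show ?thesis
      using assms(4) by linarith
  qed
  then have "\<theta>\<^sup>2 * (real l * min p (1 - p)) - \<theta> * d \<le> \<theta>\<^sup>2 * b - \<theta> * d"
    by (simp add: mult_left_mono)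
  also have "\<dots> = - d\<^sup>2 / (4 * b)"
    using assms(3) unfolding \<theta>_def by (simp add: field_simps power2_eq_square)
  finally have "real (n choose m) * exp (\<theta>\<^sup>2 * (real l * min p (1 - p)) - \<theta> * d)
      \<le> real (n choose m) * exp (- d\<^sup>2 / (4 * b))"
    by (intro mult_left_mono) simp_all
  then show ?thesis
    using card_ksubsets_prefix_gt_le_exp[OF assms(1,2) \<theta>, of d] unfolding p_def by linarith
qed

definition prefix_bounded :: "nat \<Rightarrow> nat \<Rightarrow> real \<Rightarrow> nat set \<Rightarrow> bool" where
  "prefix_bounded n m d X \<longleftrightarrow> (\<forall>l\<le>n. real (card (X \<inter> {1..l})) \<le> real l * real m / real n + d)"

lemma card_not_prefix_bounded_le:
  fixes b d :: real
  assumes "F \<subseteq> ksubsets n m" "\<forall>X\<in>F. \<not> prefix_bounded n m d X"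
    and "m \<le> n" "0 < b" "real (min m (n - m)) \<le> b" "0 \<le> d" "d \<le> 2 * b"
  shows "real (card F) \<le> real (n + 1) * real (n choose m) * exp (- d\<^sup>2 / (4 * b))"
proof -
  let ?T = "\<lambda>l. {X\<in>ksubsets n m. real l * real m / real n + d < real (card (X \<inter> {1..l}))}"
  have "F \<subseteq> (\<Union>l\<in>{..n}. ?T l)"
    using assms(1,2) unfolding prefix_bounded_def by (auto simp: not_le)
  then have "card F \<le> card (\<Union>l\<in>{..n}. ?T l)"
    by (rule card_mono[rotated]) (simp add: finite_ksubsets)
  also have "\<dots> \<le> (\<Sum>l\<in>{..n}. card (?T l))"
    by (rule card_UN_le) simp
  finally have "real (card F) \<le> (\<Sum>l\<in>{..n}. real (card (?T l)))"
    by (simp only: of_nat_le_iff flip: of_nat_sum)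
  also have "\<dots> \<le> (\<Sum>l\<in>{..n}. real (n choose m) * exp (- d\<^sup>2 / (4 * b)))"
    using card_ksubsets_prefix_gt_le[OF assms(3) _ assms(4-7)] by (intro sum_mono) auto
  finally show ?thesis
    by (simp add: mult.assoc)
qed

section \<open>Two families with small cross intersections\<close>

lemma prefix_bounded_imp_prefix_sparse:
  assumes "X \<in> ksubsets n a" "Y \<in> ksubsets n (n - a)" "a \<le> n"
    and "prefix_bounded n a d X" "prefix_bounded n (n - a) d Y" "2 * d < real s"
  shows "prefix_sparse s X Y"
  unfolding prefix_sparse_def
proof
  fix l
  show "card (X \<inter> {1..l}) + card (Y \<inter> {1..l}) < l + s"
  proof (cases "l \<le> n")
    case True
    have "real (card (X \<inter> {1..l})) + real (card (Y \<inter> {1..l}))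
        \<le> (real l * real a / real n + d) + (real l * real (n - a) / real n + d)"
      using assms(4,5) True unfolding prefix_bounded_def by (intro add_mono) auto
    also have "\<dots> = real l + 2 * d"
      using True assms(3) by (cases "n = 0") (simp_all add: of_nat_diff field_simps)
    finally have "real (card (X \<inter> {1..l}) + card (Y \<inter> {1..l})) < real (l + s)"
      using assms(6) by simp
    then show ?thesis
      by (simp only: of_nat_less_iff)
  next
    case False
    then have "X \<inter> {1..l} = X" "Y \<inter> {1..l} = Y"
      using assms(1,2) unfolding ksubsets_def by auto
    then show ?thesis
      using False assms(1-3) unfolding ksubsets_def by simp
  qed
qed

lemma cross_intersecting_complements:
  assumes "A \<subseteq> ksubsets n a" "\<forall>X\<in>A. \<forall>Y\<in>B. card (X \<inter> Y) \<le> t"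
  shows "cross_intersecting (a - t) A ((\<lambda>Y. {1..n} - Y) ` B)"
  unfolding cross_intersecting_def
proof (intro ballI)
  fix X Z assume "X \<in> A" "Z \<in> (\<lambda>Y. {1..n} - Y) ` B"
  then obtain Y where "Y \<in> B" "Z = {1..n} - Y" "X \<subseteq> {1..n}" "card X = a"
    using assms(1) unfolding ksubsets_def by blast
  moreover have "finite X"
    using \<open>X \<subseteq> {1..n}\<close> finite_subset by blast
  ultimately show "a - t \<le> card (X \<inter> Z)"
    using card_Int_complement[of X "{1..n}" Y] assms(2) \<open>X \<in> A\<close> by (simp add: diff_le_mono2)
qed

lemma left_shifted_cross_intersecting_not_prefix_bounded:
  assumes "A \<subseteq> ksubsets n a" "C \<subseteq> ksubsets n (n - a)" "a \<le> n"
    and "cross_intersecting s A C" "left_shifted C" "2 * d < real s"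
  shows "(\<forall>X\<in>A. \<not> prefix_bounded n a d X) \<or> (\<forall>Y\<in>C. \<not> prefix_bounded n (n - a) d Y)"
proof (rule ccontr)
  assume "\<not> ?thesis"
  then obtain X Y where X: "X \<in> A" "prefix_bounded n a d X"
    and Y: "Y \<in> C" "prefix_bounded n (n - a) d Y"
    by blast
  then have "prefix_sparse s X Y"
    using prefix_bounded_imp_prefix_sparse assms(1-3,6) by blast
  moreover have "X \<subseteq> {1..n}"
    using X(1) assms(1) unfolding ksubsets_def by blast
  then have "finite X" "0 \<notin> X"
    using finite_subset by auto
  ultimately obtain Y' where "Y' \<in> C" "card (X \<inter> Y') < s"
    using left_shifted_ex_small_Int assms(5) Y(1) by blast
  then show False
    using assms(4) X(1) unfolding cross_intersecting_def by (meson not_le)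
qed

lemma two_families_bound:
  fixes d :: real
  assumes "0 < a" "a \<le> n" "A \<subseteq> ksubsets n a" "B \<subseteq> ksubsets n a"
    and "\<forall>X\<in>A. \<forall>Y\<in>B. card (X \<inter> Y) \<le> t"
    and "0 \<le> d" "d \<le> 2 * real a" "2 * d < real (a - t)"
  shows "real (min (card A) (card B)) \<le> real (n + 1) * real (n choose a) * exp (- d\<^sup>2 / (4 * real a))"
    (is "_ \<le> ?bound")
proof -
  let ?C = "(\<lambda>Y. {1..n} - Y) ` B"
  have C: "?C \<subseteq> ksubsets n (n - a)"
    using assms(4) complement_ksubsets by blast
  have "card ?C = card B"
    using card_image inj_on_subset[OF inj_on_complement_ksubsets assms(4)] by blast
  obtain A' C' where A': "A' \<subseteq> ksubsets n a" and C': "C' \<subseteq> ksubsets n (n - a)"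
    and "card A' = card A" "card C' = card ?C"
    and "cross_intersecting (a - t) A' C'" "left_shifted C'"
    using ex_left_shifted_cross_intersecting[OF assms(3) C cross_intersecting_complements[OF assms(3,5)]]
    by blast
  then have "(\<forall>X\<in>A'. \<not> prefix_bounded n a d X) \<or> (\<forall>Y\<in>C'. \<not> prefix_bounded n (n - a) d Y)"
    using left_shifted_cross_intersecting_not_prefix_bounded assms(2,8) by blast
  then have "real (card A') \<le> ?bound \<or> real (card C') \<le> ?bound"
    using card_not_prefix_bounded_le[OF A', of d "real a"] card_not_prefix_bounded_le[OF C', of d "real a"]
      assms(1,2,6,7) by (auto simp: binomial_symmetric[OF assms(2), symmetric])
  then show ?thesis
    using \<open>card A' = card A\<close> \<open>card C' = card ?C\<close> \<open>card ?C = card B\<close>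
    by (auto simp: of_nat_min min_le_iff_disj)
qed

lemma tail_factor_le_sqrt_exp:
  fixes D :: real
  assumes "0 < a" "a < n"
    and small: "sqrt (32 * real a * (real n - real a)) * exp (- D\<^sup>2 / (40 * real a)) < 1"
  shows "real (n + 1) * exp (- (D / 2)\<^sup>2 / (4 * real a))
    \<le> sqrt (32 * real a * (real n - real a)) * exp (- D\<^sup>2 / (40 * real a))"
proof -
  define S where "S = sqrt (32 * real a * (real n - real a))"
  define g where "g = exp (- D\<^sup>2 / (40 * real a))"
  have "0 \<le> (real a - 1) * (real n - real a - 1)"
    using assms(1,2) by (simp add: Suc_le_eq mult_nonneg_nonneg)
  moreover have "2 \<le> real n"
    using assms(1,2) by linarith
  ultimately have "real (n + 1) \<le> 32 * real a * (real n - real a)"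
    by (simp add: algebra_simps)
  also have "\<dots> = S\<^sup>2"
    unfolding S_def using assms(2) by simp
  finally have n: "real (n + 1) \<le> S\<^sup>2" .
  have "D\<^sup>2 / (20 * real a) \<le> D\<^sup>2 / (16 * real a)"
    using assms(1) by (intro divide_left_mono) auto
  moreover have "- (D / 2)\<^sup>2 / (4 * real a) = - (D\<^sup>2 / (16 * real a))"
    "2 * (- D\<^sup>2 / (40 * real a)) = - (D\<^sup>2 / (20 * real a))"
    using assms(1) by (simp_all add: power_divide field_simps)
  ultimately have "exp (- (D / 2)\<^sup>2 / (4 * real a)) \<le> exp (2 * (- D\<^sup>2 / (40 * real a)))"
    by simp
  also have "\<dots> = g\<^sup>2"
    unfolding g_def by (simp add: power2_eq_square flip: exp_add)
  finally have "real (n + 1) * exp (- (D / 2)\<^sup>2 / (4 * real a)) \<le> S\<^sup>2 * g\<^sup>2"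
    using n by (intro mult_mono) auto
  also have "\<dots> = (S * g) * (S * g)"
    by (simp add: power2_eq_square)
  also have "\<dots> \<le> S * g"
    using small assms(2) unfolding S_def g_def by (intro mult_left_le) auto
  finally show ?thesis
    unfolding S_def g_def .
qed

definition cross_bound :: "nat \<Rightarrow> nat \<Rightarrow> nat \<Rightarrow> real" where
  "cross_bound n a t = sqrt (32 * real a * (real n - real a))
    * exp (- ((real a - real t - 1)\<^sup>2) / (40 * real a)) * real (n choose a)"

lemma cross_bound_nonneg: "a \<le> n \<Longrightarrow> 0 \<le> cross_bound n a t"
  unfolding cross_bound_def by simp

lemma two_families_cross_bound:
  assumes "t < a" "a < n" "A \<subseteq> ksubsets n a" "B \<subseteq> ksubsets n a"
    and "\<forall>X\<in>A. \<forall>Y\<in>B. card (X \<inter> Y) \<le> t"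
  shows "real (min (card A) (card B)) \<le> cross_bound n a t"
proof -
  define \<epsilon> where "\<epsilon> = sqrt (32 * real a * (real n - real a)) * exp (- ((real a - real t - 1)\<^sup>2) / (40 * real a))"
  have "real (min (card A) (card B)) \<le> \<epsilon> * real (n choose a)"
  proof (cases "1 \<le> \<epsilon>")
    case True
    have "card A \<le> n choose a"
      using card_mono[OF finite_ksubsets assms(3)] by (simp add: card_ksubsets)
    then have "real (min (card A) (card B)) \<le> 1 * real (n choose a)"
      by simp
    also have "\<dots> \<le> \<epsilon> * real (n choose a)"
      using True by (intro mult_right_mono) auto
    finally show ?thesis .
  next
    case False
    define d where "d = (real a - real t - 1) / 2"
    have "real (min (card A) (card B)) \<le> real (n + 1) * real (n choose a) * exp (- d\<^sup>2 / (4 * real a))"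
      using assms unfolding d_def by (intro two_families_bound) (auto simp: of_nat_diff)
    also have "\<dots> = (real (n + 1) * exp (- d\<^sup>2 / (4 * real a))) * real (n choose a)"
      by (simp add: ac_simps)
    also have "\<dots> \<le> \<epsilon> * real (n choose a)"
      using tail_factor_le_sqrt_exp[of a n "real a - real t - 1"] assms(1,2) False
      unfolding d_def \<epsilon>_def by (intro mult_right_mono) simp_all
    finally show ?thesis .
  qed
  then show ?thesis
    unfolding cross_bound_def \<epsilon>_def .
qed

section \<open>Union bound\<close>

lemma ex_mem_not_in_UN:
  fixes e :: real
  assumes "finite A" "finite I" "\<And>i. i \<in> I \<Longrightarrow> B i \<subseteq> A" "\<And>i. i \<in> I \<Longrightarrow> real (card (B i)) \<le> e"
    and "real (card I) * e < real (card A)"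
  shows "\<exists>x\<in>A. \<forall>i\<in>I. x \<notin> B i"
proof (rule ccontr)
  assume "\<not> ?thesis"
  then have "A \<subseteq> (\<Union>i\<in>I. B i)"
    by blast
  then have "card A \<le> card (\<Union>i\<in>I. B i)"
    using assms(1-3) by (intro card_mono) (auto intro: finite_subset)
  also have "\<dots> \<le> (\<Sum>i\<in>I. card (B i))"
    by (rule card_UN_le[OF assms(2)])
  finally have "real (card A) \<le> (\<Sum>i\<in>I. real (card (B i)))"
    by (simp flip: of_nat_sum)
  also have "\<dots> \<le> real (card I) * e"
    using sum_mono[of I "\<lambda>i. real (card (B i))" "\<lambda>_. e"] assms(4) by simp
  finally show False
    using assms(5) by simp
qed

lemma ex_mem_meets_all:
  assumes "t < a" "a < n" "A \<subseteq> ksubsets n a" "finite I"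
    and "\<And>i. i \<in> I \<Longrightarrow> G i \<subseteq> ksubsets n a" "\<And>i. i \<in> I \<Longrightarrow> cross_bound n a t < real (card (G i))"
    and "real (card I) * cross_bound n a t < real (card A)"
  shows "\<exists>X\<in>A. \<forall>i\<in>I. \<exists>Y\<in>G i. t < card (X \<inter> Y)"
proof -
  define Bad where "Bad i = {X\<in>A. \<forall>Y\<in>G i. card (X \<inter> Y) \<le> t}" for i
  have "real (min (card (Bad i)) (card (G i))) \<le> cross_bound n a t" if "i \<in> I" for i
    using assms(1-3,5) that unfolding Bad_def by (intro two_families_cross_bound) auto
  then have "real (card (Bad i)) \<le> cross_bound n a t" if "i \<in> I" for i
    using assms(6) that by (fastforce simp: min_def split: if_splits)
  then obtain X where "X \<in> A" "\<forall>i\<in>I. X \<notin> Bad i"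
    using ex_mem_not_in_UN[of A I Bad] finite_subset[OF assms(3) finite_ksubsets] assms(4,7)
    unfolding Bad_def by blast
  then show ?thesis
    unfolding Bad_def by (auto simp: not_le)
qed

lemma real_minus_one_mult_less:
  fixes e x :: real
  assumes "1 \<le> k" "0 \<le> e" "2 powr (real k - 2) * e + 2 powr (real k - 2) \<le> x"
  shows "(real k - 1) * e < x"
proof -
  have "real k - 1 \<le> 2 powr (real k - 2)"
  proof (cases "k = 1")
    case True
    then show ?thesis by simp
  next
    case False
    then have "real k - 2 = real (k - 2)"
      using assms(1) by (simp add: of_nat_diff)
    moreover have "(2::real) powr real (k - 2) = 2 ^ (k - 2)"
      by (rule powr_realpow) simp
    ultimately have "2 powr (real k - 2) = 2 ^ (k - 2)"
      by (simp only:)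
    moreover have "k - 1 = Suc (k - 2)"
      using False assms(1) by simp
    then have "k - 1 \<le> (2::nat) ^ (k - 2)"
      using less_exp[of "k - 2"] by (simp add: Suc_le_eq)
    then have "real (k - 1) \<le> 2 ^ (k - 2)"
      by (metis of_nat_le_iff of_nat_numeral of_nat_power)
    ultimately show ?thesis
      using assms(1) by (simp add: of_nat_diff)
  qed
  then have "(real k - 1) * e \<le> 2 powr (real k - 2) * e"
    using assms(2) by (rule mult_right_mono)
  then show ?thesis
    using assms(3) powr_gt_zero[of 2 "real k - 2"] by linarith
qed

theorem lemma5:
  fixes n a t k :: nat and \<F> :: "nat \<Rightarrow> nat set set"
  assumes "t < a" and "a < n"
    and "\<And>i. i \<in> {1..k} \<Longrightarrow> \<F> i \<subseteq> ksubsets n a"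
    and "\<And>i. i \<in> {1..k} \<Longrightarrow>
      real (card (\<F> i)) \<ge> 2 powr (real k - 2) * sqrt (32 * real a * (real n - real a))
        * exp (- ((real a - real t - 1)^2) / (40 * real a)) * real (n choose a) + 2 powr (real k - 2)"
  shows "\<exists>F :: nat \<Rightarrow> nat set. (\<forall>i\<in>{1..k}. F i \<in> \<F> i) \<and>
           (\<forall>i\<in>{2..k}. card (F 1 \<inter> F i) \<ge> t + 1)"
proof (cases "k = 0")
  case True
  then show ?thesis by simp
next
  case False
  have "0 \<le> cross_bound n a t"
    using assms(2) by (simp add: cross_bound_nonneg)
  have large: "(real k - 1) * cross_bound n a t < real (card (\<F> i))" if "i \<in> {1..k}" for i
    using real_minus_one_mult_less[OF _ \<open>0 \<le> cross_bound n a t\<close>] assms(4)[OF that] False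
    unfolding cross_bound_def by (simp add: mult.assoc)
  have "\<exists>X\<in>\<F> 1. \<forall>i\<in>{2..k}. \<exists>Y\<in>\<F> i. t < card (X \<inter> Y)"
  proof (rule ex_mem_meets_all[OF assms(1,2)])
    show "cross_bound n a t < real (card (\<F> i))" if "i \<in> {2..k}" for i
      using large[of i] mult_right_mono[of 1 "real k - 1", OF _ \<open>0 \<le> cross_bound n a t\<close>] that
      by fastforce
    show "real (card {2..k}) * cross_bound n a t < real (card (\<F> 1))"
      using large[of 1] False by (simp add: of_nat_diff)
  qed (use assms(3) False in auto)
  then obtain X G where "X \<in> \<F> 1" "\<forall>i\<in>{2..k}. G i \<in> \<F> i \<and> t < card (X \<inter> G i)"
    by metis
  then show ?thesis
    by (intro exI[of _ "G(1 := X)"]) auto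
qed

end
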